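(* Let $X$ be a finite set, let $\emptyset \neq A \subseteq B \subseteq 2^X$, let $X_p$ be a random subset of $X$ with distribution $\mu_p$, let $p\in(0,1)$, and let $K=48$. Then for any $\epsilon \in (0,1)$ satisfying $$\epsilon > 1 - r_{A,B}(p)\left(1-\ell_0(\langle A\rangle)\,2^{-p/(K q(\langle A \rangle))}\right),$$ we have $$\mathbb{P}\big(X_p \in A \mid X_p \in B\big) > 1-\epsilon.$$
   Context: For $p\in[0,1]$, $\mu_p$ is the product measure on $2^X$: $\mu_p(S)=p^{|S|}(1-p)^{|X|-|S|}$ for $S\subseteq X$, extended to families by $\mu_p(\mathcal{F})=\sum_{S\in\mathcal{F}}\mu_p(S)$. For $\mathcal{A}\subseteq 2^X$, $\langle \mathcal{A}\rangle=\{T\subseteq X: S\subseteq T\text{ for some }S\in\mathcal{A}\}$ (the upper set generated by $\mathcal{A}$). A family $\mathcal{G}$ covers an upper set $\mathcal{F}$ if $\mathcal{F}\subseteq\bigcup_{S\in\mathcal{G}}\langle\{S\}\rangle$; $\mathcal{F}$ is $p$-small if some cover $\mathcal{G}$ has $\sum_{S\in\mathcal{G}}p^{|S|}\le\frac12$; $q(\mathcal{F})$ is the largest $p$ for which $\mathcal{F}$ is $p$-small. With $\mathcal{F}_0$ the set of inclusion-minimal elements of $\mathcal{F}$, $\ell_0(\mathcal{F})=\max\{|S|:S\in\mathcal{F}_0\}$. For $\emptyset\ne A\subseteq B\subseteq 2^X$, $r_{A,B}(p)=\dfrac{\mathbb{P}(X_p\in A\mid X_p\in\langle A\rangle)}{\mathbb{P}(X_p\in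 B)}$. *)

theory Defs
  imports Complex_Main
begin

definition mu :: "'a set \<Rightarrow> real \<Rightarrow> 'a set \<Rightarrow> real" where
  "mu X p S = p ^ card S * (1 - p) ^ (card X - card S)"

definition mu_fam :: "'a set \<Rightarrow> real \<Rightarrow> 'a set set \<Rightarrow> real" where
  "mu_fam X p F = (\<Sum>S\<in>F. mu X p S)"

definition upset :: "'a set \<Rightarrow> 'a set set \<Rightarrow> 'a set set" where
  "upset X A = {T. T \<subseteq> X \<and> (\<exists>S\<in>A. S \<subseteq> T)}"

definition covers :: "'a set \<Rightarrow> 'a set set \<Rightarrow> 'a set set \<Rightarrow> bool" where
  "covers X G F \<longleftrightarrow> F \<subseteq> (\<Union>S\<in>G. upset X {S})"

definition p_small :: "'a set \<Rightarrow> real \<Rightarrow> 'a set set \<Rightarrow> bool" where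
  "p_small X p F \<longleftrightarrow> (\<exists>G. G \<subseteq> Pow X \<and> covers X G F \<and> (\<Sum>S\<in>G. p ^ card S) \<le> 1/2)"

definition qq :: "'a set \<Rightarrow> 'a set set \<Rightarrow> real" where
  "qq X F = Sup {p. 0 \<le> p \<and> p \<le> 1 \<and> p_small X p F}"

definition minimal_elems :: "'a set set \<Rightarrow> 'a set set" where
  "minimal_elems F = {S\<in>F. \<forall>T\<in>F. T \<subseteq> S \<longrightarrow> T = S}"

definition ell0 :: "'a set set \<Rightarrow> nat" where
  "ell0 F = Max (card ` minimal_elems F)"

definition r_AB :: "'a set \<Rightarrow> 'a set set \<Rightarrow> 'a set set \<Rightarrow> real \<Rightarrow> real" where
  "r_AB X A B p = (mu_fam X p A / mu_fam X p (upset X A)) / mu_fam X p B"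

end

theory Submission
  imports Defs
begin

text \<open>
  Since \<open>P(X\<^sub>p \<in> A | X\<^sub>p \<in> B) = r\<^bsub>A,B\<^esub>(p) \<mu>\<^sub>p(\<langle>A\<rangle>)\<close>, it suffices to prove the
  Park--Pham type bound \<open>\<mu>\<^sub>p(\<langle>A\<rangle>) \<ge> 1 - \<ell> 2^(-p/(48 q))\<close>. Let \<open>G\<close> be the minimal elements of
  \<open>\<langle>A\<rangle>\<close>: its members have size at most \<open>\<ell>\<close>, and \<open>\<langle>G\<rangle>\<close> has no cover of weight below \<open>1/2\<close>
  at \<open>q\<close>. Write \<open>X\<^sub>p\<close> as the union of \<open>N\<close> independent \<open>w\<close>-random sets. Once a round \<open>W\<close> is
  exposed, each \<open>S \<in> G\<close> only needs its fragment \<open>S - W\<close>, and the minimal fragments still have no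
  cheap cover. A fragment \<open>T\<close> is determined inside a single member of \<open>G\<close> by \<open>W \<union> T\<close>, so the
  expected number of minimal fragments of size \<open>k\<close> is at most \<open>C(\<ell>,k) ((1-w)/w)^k\<close>. By Markov's
  inequality the fragments of size above \<open>\<ell>/2\<close> are then usually cheap to cover, and the remaining
  fragments form a family of half the width that still has no cheap cover. Induction over the rounds
  shrinks the failure probability by a factor \<open>2^(-B/48)\<close> per round, where \<open>N B = p/q\<close>.
\<close>

section \<open>The product measure\<close>

lemma mu_nonneg: "0 \<le> p \<Longrightarrow> p \<le> 1 \<Longrightarrow> 0 \<le> mu X p S"
  by (simp add: mu_def)

lemma mu_pos: "0 < p \<Longrightarrow> p < 1 \<Longrightarrow> 0 < mu X p S"
  by (simp add: mu_def)

lemma mu_insert_notin: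
  assumes "finite X" "x \<notin> X" "Y \<subseteq> X"
  shows "mu (insert x X) p Y = (1 - p) * mu X p Y"
proof -
  have "card Y \<le> card X" using assms by (simp add: card_mono)
  then have "card (insert x X) - card Y = Suc (card X - card Y)" using assms by simp
  then show ?thesis by (simp add: mu_def)
qed

lemma mu_insert_insert:
  assumes "finite X" "x \<notin> X" "Y \<subseteq> X"
  shows "mu (insert x X) p (insert x Y) = p * mu X p Y"
proof -
  have "finite Y" "x \<notin> Y" using assms finite_subset by blast+
  then show ?thesis using assms by (simp add: mu_def)
qed

lemma sum_Pow_insert_mu:
  assumes "finite X" "x \<notin> X"
  shows "(\<Sum>Y\<in>Pow (insert x X). mu (insert x X) p Y * f Y)
    = (1 - p) * (\<Sum>Y\<in>Pow X. mu X p Y * f Y) + p * (\<Sum>Y\<in>Pow X. mu X p Y * f (insert x Y))"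
proof -
  have inj: "inj_on (insert x) (Pow X)"
    unfolding inj_on_def using assms(2) by (metis Pow_iff insert_ident subset_iff)
  have disj: "Pow X \<inter> insert x ` Pow X = {}" using assms(2) by auto
  have "(\<Sum>Y\<in>Pow (insert x X). mu (insert x X) p Y * f Y)
      = (\<Sum>Y\<in>Pow X. mu (insert x X) p Y * f Y)
        + (\<Sum>Y\<in>insert x ` Pow X. mu (insert x X) p Y * f Y)"
    unfolding Pow_insert using assms disj by (intro sum.union_disjoint) auto
  also have "(\<Sum>Y\<in>insert x ` Pow X. mu (insert x X) p Y * f Y)
      = (\<Sum>Y\<in>Pow X. p * (mu X p Y * f (insert x Y)))"
    using inj assms by (simp add: sum.reindex mu_insert_insert mult.assoc)
  also have "(\<Sum>Y\<in>Pow X. mu (insert x X) p Y * f Y) = (\<Sum>Y\<in>Pow X. (1 - p) * (mu X p Y * f Y))"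
    using assms by (intro sum.cong) (auto simp: mu_insert_notin)
  finally show ?thesis by (simp add: sum_distrib_left)
qed

lemma sum_mu_Pow: "finite X \<Longrightarrow> (\<Sum>Y\<in>Pow X. mu X p Y) = 1"
proof (induction X rule: finite_induct)
  case empty
  then show ?case by (simp add: mu_def)
next
  case (insert x X)
  then show ?case
    using sum_Pow_insert_mu[OF insert(1,2), of p "\<lambda>_. 1"] by simp
qed

text \<open>The union of independent \<open>a\<close>- and \<open>b\<close>-random subsets is \<open>(1 - (1 - a) (1 - b))\<close>-random.\<close>
lemma sum_mu_Un_indep:
  assumes "finite X"
  shows "(\<Sum>W\<in>Pow X. mu X a W * (\<Sum>Y\<in>Pow X. mu X b Y * f (W \<union> Y)))
       = (\<Sum>Z\<in>Pow X. mu X (1 - (1 - a) * (1 - b)) Z * f Z)"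
  using assms
proof (induction X arbitrary: f rule: finite_induct)
  case empty
  then show ?case by (simp add: mu_def)
next
  case (insert x X)
  let ?c = "1 - (1 - a) * (1 - b)"
  let ?E = "\<lambda>f. \<Sum>W\<in>Pow X. mu X a W * (\<Sum>Y\<in>Pow X. mu X b Y * f (W \<union> Y))"
  have lin: "(\<Sum>W\<in>Pow X. mu X a W * (c * g W + d * h W))
      = c * (\<Sum>W\<in>Pow X. mu X a W * g W) + d * (\<Sum>W\<in>Pow X. mu X a W * h W)"
    for c d :: real and g h
    by (simp add: sum.distrib sum_distrib_left algebra_simps)
  have "(\<Sum>W\<in>Pow (insert x X). mu (insert x X) a W
          * (\<Sum>Y\<in>Pow (insert x X). mu (insert x X) b Y * f (W \<union> Y)))
      = (1 - a) * ((1 - b) * ?E f + b * ?E (\<lambda>Z. f (insert x Z))) + a * ?E (\<lambda>Z. f (insert x Z))"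
    unfolding sum_Pow_insert_mu[OF insert(1,2)] lin
    by (simp add: algebra_simps)
  also have "\<dots> = (1 - ?c) * (\<Sum>Z\<in>Pow X. mu X ?c Z * f Z)
      + ?c * (\<Sum>Z\<in>Pow X. mu X ?c Z * f (insert x Z))"
    using insert(3)[of f] insert(3)[of "\<lambda>Z. f (insert x Z)"] by (simp add: algebra_simps)
  also have "\<dots> = (\<Sum>Z\<in>Pow (insert x X). mu (insert x X) ?c Z * f Z)"
    by (rule sum_Pow_insert_mu[OF insert(1,2), symmetric])
  finally show ?case .
qed

lemma sum_mu_disjoint:
  assumes "finite X" "D \<subseteq> X"
  shows "(\<Sum>Y\<in>{Y\<in>Pow X. Y \<inter> D = {}}. mu X w Y) = (1 - w) ^ card D"
proof -
  have "finite D" using assms finite_subset by blast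
  then have cX: "card X = card D + card (X - D)"
    using assms by (metis card_Diff_subset card_mono le_add_diff_inverse)
  have "mu X w Y = (1 - w) ^ card D * mu (X - D) w Y" if "Y \<subseteq> X - D" for Y
  proof -
    have "card Y \<le> card (X - D)" using that assms by (simp add: card_mono)
    then have "card X - card Y = card D + (card (X - D) - card Y)" using cX by simp
    then show ?thesis by (simp add: mu_def power_add algebra_simps)
  qed
  moreover have "{Y\<in>Pow X. Y \<inter> D = {}} = Pow (X - D)" by auto
  ultimately show ?thesis
    using sum_mu_Pow[of "X - D" w] assms by (simp add: sum_distrib_left[symmetric])
qed

lemma mu_Un_disjoint:
  assumes "finite X" "W \<subseteq> X" "T \<subseteq> X" "W \<inter> T = {}" "0 < w"
  shows "mu X w W = mu X w (W \<union> T) * ((1 - w) / w) ^ card T"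
proof -
  have "finite W" "finite T" using assms finite_subset by blast+
  then have cU: "card (W \<union> T) = card W + card T" using assms card_Un_disjoint by metis
  have "card (W \<union> T) \<le> card X" using assms by (intro card_mono) auto
  then have n: "card X - card W = (card X - card (W \<union> T)) + card T" using cU by simp
  show ?thesis
    using assms(5) unfolding mu_def n cU by (simp add: power_add power_divide field_simps)
qed

section \<open>Upsets and their complements\<close>

definition miss_prob :: "'a set \<Rightarrow> real \<Rightarrow> 'a set set \<Rightarrow> real" where
  "miss_prob X p G = (\<Sum>Y\<in>Pow X - upset X G. mu X p Y)"

lemma upset_subset_Pow: "upset X G \<subseteq> Pow X"
  unfolding upset_def by blast

lemma subset_upset: "G \<subseteq> Pow X \<Longrightarrow> G \<subseteq> upset X G"
  unfolding upset_def by blast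

lemma upset_mono:
  assumes "\<And>S. S \<in> G \<Longrightarrow> \<exists>T\<in>G'. T \<subseteq> S"
  shows "upset X G \<subseteq> upset X G'"
proof
  fix Y assume "Y \<in> upset X G"
  then obtain S where S: "S \<in> G" "S \<subseteq> Y" "Y \<subseteq> X" unfolding upset_def by blast
  then obtain T where "T \<in> G'" "T \<subseteq> S" using assms by blast
  then show "Y \<in> upset X G'" using S unfolding upset_def by blast
qed

lemma upset_upset: "upset X (upset X G) = upset X G"
  unfolding upset_def by blast

lemma minimal_elems_subset: "minimal_elems F \<subseteq> F"
  unfolding minimal_elems_def by blast

lemma exists_minimal_elem_subset:
  assumes "S \<in> F" "finite S"
  shows "\<exists>T\<in>minimal_elems F. T \<subseteq> S"
proof -
  let ?P = "\<lambda>T. T \<in> F \<and> T \<subseteq> S"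
  obtain T where T: "?P T" "\<And>T'. ?P T' \<Longrightarrow> card T \<le> card T'"
    using ex_has_least_nat[of ?P S card] assms by blast
  have "finite T" using T(1) assms(2) finite_subset by blast
  have "T' = T" if "T' \<in> F" "T' \<subseteq> T" for T'
    using card_seteq[OF \<open>finite T\<close> that(2)] T that by blast
  then have "T \<in> minimal_elems F"
    unfolding minimal_elems_def using T(1) by blast
  then show ?thesis using T(1) by blast
qed

lemma upset_minimal_elems:
  assumes "finite X" "F \<subseteq> Pow X"
  shows "upset X (minimal_elems F) = upset X F"
proof
  show "upset X (minimal_elems F) \<subseteq> upset X F"
    using minimal_elems_subset by (intro upset_mono) blast
  show "upset X F \<subseteq> upset X (minimal_elems F)"
  proof (rule upset_mono)
    fix S assume "S \<in> F"
    moreover then have "finite S" using assms finite_subset by blast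
    ultimately show "\<exists>T\<in>minimal_elems F. T \<subseteq> S" by (rule exists_minimal_elem_subset)
  qed
qed

lemma miss_prob_indicator:
  assumes "finite X"
  shows "miss_prob X p G = (\<Sum>Y\<in>Pow X. mu X p Y * of_bool (Y \<notin> upset X G))"
proof -
  have "(\<Sum>Y\<in>Pow X. mu X p Y * of_bool (Y \<notin> upset X G))
      = (\<Sum>Y\<in>Pow X. if Y \<notin> upset X G then mu X p Y else 0)"
    by (intro sum.cong) auto
  also have "\<dots> = (\<Sum>Y\<in>{Y\<in>Pow X. Y \<notin> upset X G}. mu X p Y)"
    using assms by (intro sum.inter_filter[symmetric]) simp
  also have "{Y\<in>Pow X. Y \<notin> upset X G} = Pow X - upset X G" by blast
  finally show ?thesis unfolding miss_prob_def ..
qed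

lemma mu_fam_upset:
  assumes "finite X"
  shows "mu_fam X p (upset X G) = 1 - miss_prob X p G"
  using sum.subset_diff[OF upset_subset_Pow, of X "mu X p" G] sum_mu_Pow[OF assms, of p] assms
  unfolding mu_fam_def miss_prob_def by simp

lemma miss_prob_nonneg: "0 \<le> p \<Longrightarrow> p \<le> 1 \<Longrightarrow> 0 \<le> miss_prob X p G"
  unfolding miss_prob_def by (intro sum_nonneg mu_nonneg)

lemma miss_prob_le_1:
  assumes "finite X" "0 \<le> p" "p \<le> 1"
  shows "miss_prob X p G \<le> 1"
proof -
  have "miss_prob X p G \<le> (\<Sum>Y\<in>Pow X. mu X p Y)"
    unfolding miss_prob_def using assms by (intro sum_mono2) (auto intro: mu_nonneg)
  then show ?thesis using sum_mu_Pow[OF assms(1)] by simp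
qed

lemma miss_prob_antimono:
  assumes "finite X" "0 \<le> p" "p \<le> 1" "upset X G' \<subseteq> upset X G"
  shows "miss_prob X p G \<le> miss_prob X p G'"
  unfolding miss_prob_def using assms by (intro sum_mono2) (auto intro: mu_nonneg)

lemma miss_prob_empty_mem:
  assumes "{} \<in> G"
  shows "miss_prob X p G = 0"
proof -
  have "Pow X - upset X G = {}" using assms unfolding upset_def by blast
  then show ?thesis unfolding miss_prob_def by (metis sum.empty)
qed

lemma miss_prob_card_0:
  assumes "finite X" "G \<subseteq> Pow X" "G \<noteq> {}" "\<forall>S\<in>G. card S \<le> 0"
  shows "miss_prob X p G = 0"
proof -
  obtain S where "S \<in> G" using assms by auto
  moreover then have "finite S" using assms finite_subset by blast
  ultimately have "{} \<in> G" using assms by fastforce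
  then show ?thesis by (rule miss_prob_empty_mem)
qed

text \<open>The negation of \<open>a\<close>-smallness of \<open>\<langle>G\<rangle>\<close>, with the budget \<open>1/2\<close> replaced by \<open>c\<close>.\<close>
definition uncoverable :: "'a set \<Rightarrow> real \<Rightarrow> real \<Rightarrow> 'a set set \<Rightarrow> bool" where
  "uncoverable X a c G \<longleftrightarrow>
     (\<forall>C. C \<subseteq> Pow X \<longrightarrow> covers X C (upset X G) \<longrightarrow> c < (\<Sum>S\<in>C. a ^ card S))"

lemma uncoverable_mono:
  assumes "uncoverable X a c G" "upset X G \<subseteq> upset X G'"
  shows "uncoverable X a c G'"
  using assms unfolding uncoverable_def covers_def by (meson order_trans)

lemma uncoverable_nonempty: "uncoverable X a c G \<Longrightarrow> 0 \<le> c \<Longrightarrow> G \<noteq> {}"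
  unfolding uncoverable_def covers_def upset_def by force

lemma uncoverable_less_sum:
  assumes "uncoverable X a c G" "G \<subseteq> Pow X"
  shows "c < (\<Sum>S\<in>G. a ^ card S)"
  using assms unfolding uncoverable_def covers_def upset_def by blast

lemma uncoverable_card_le:
  assumes fX: "finite X" and UX: "U \<subseteq> Pow X" and unc: "uncoverable X a c U" and a: "0 \<le> a"
    and cost: "c' + (\<Sum>T\<in>{T\<in>U. h < card T}. a ^ card T) \<le> c"
  shows "uncoverable X a c' {T\<in>U. card T \<le> h}"
  unfolding uncoverable_def
proof (intro allI impI)
  fix C assume CX: "C \<subseteq> Pow X" and cov: "covers X C (upset X {T\<in>U. card T \<le> h})"
  let ?L = "{T\<in>U. h < card T}"
  have "finite (Pow X)" using fX by simp
  then have "finite C" "finite U" using CX UX finite_subset by blast+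
  then have fin: "finite C" "finite ?L" by simp_all
  have "covers X (C \<union> ?L) (upset X U)" unfolding covers_def
  proof
    fix Y assume "Y \<in> upset X U"
    then obtain T where T: "T \<in> U" "T \<subseteq> Y" "Y \<subseteq> X" unfolding upset_def by blast
    show "Y \<in> (\<Union>S\<in>C \<union> ?L. upset X {S})"
    proof (cases "card T \<le> h")
      case True
      then have "Y \<in> upset X {T\<in>U. card T \<le> h}" using T unfolding upset_def by blast
      then show ?thesis using cov unfolding covers_def by blast
    next
      case False
      then have "T \<in> ?L" using T by simp
      moreover have "Y \<in> upset X {T}" using T unfolding upset_def by blast
      ultimately show ?thesis by blast
    qed
  qed
  moreover have "C \<union> ?L \<subseteq> Pow X" using CX UX by blast
  ultimately have "c < (\<Sum>S\<in>C \<union> ?L. a ^ card S)" using unc unfolding uncoverable_def by blast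
  also have "\<dots> \<le> (\<Sum>S\<in>C. a ^ card S) + (\<Sum>S\<in>?L. a ^ card S)"
    using sum.union_inter[OF fin, of "\<lambda>S. a ^ card S"] sum_nonneg[of "C \<inter> ?L" "\<lambda>S. a ^ card S"] a
    by simp
  finally show "c' < (\<Sum>S\<in>C. a ^ card S)" using cost by linarith
qed

section \<open>Fragments\<close>

text \<open>Once a round has exposed \<open>W\<close>, the set \<open>S\<close> only needs \<open>S - W\<close>; the fragments of the
  argument are the minimal elements of this residual family.\<close>
definition residual :: "'a set set \<Rightarrow> 'a set \<Rightarrow> 'a set set" where
  "residual G W = (\<lambda>S. S - W) ` G"

lemma residual_subset_Pow: "G \<subseteq> Pow X \<Longrightarrow> residual G W \<subseteq> Pow X"
  unfolding residual_def by blast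

lemma finite_residual: "finite X \<Longrightarrow> G \<subseteq> Pow X \<Longrightarrow> finite (residual G W)"
  by (metis finite_Pow_iff finite_subset residual_subset_Pow)

lemma residual_disjoint: "T \<in> residual G W \<Longrightarrow> T \<inter> W = {}"
  unfolding residual_def by blast

lemma card_residual_le:
  assumes "finite X" "G \<subseteq> Pow X" "\<forall>S\<in>G. card S \<le> l" "T \<in> residual G W"
  shows "card T \<le> l"
proof -
  obtain S where S: "S \<in> G" "T = S - W" using assms(4) unfolding residual_def by blast
  then have "finite S" using assms finite_subset by blast
  then show ?thesis using S assms(3) card_mono[of S T] by fastforce
qed

lemma Un_mem_upset_iff:
  assumes "W \<subseteq> X" "Y \<subseteq> X"
  shows "W \<union> Y \<in> upset X G \<longleftrightarrow> Y \<in> upset X (residual G W)"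
proof -
  have "(\<exists>T\<in>(\<lambda>S. S - W) ` G. T \<subseteq> Y) \<longleftrightarrow> (\<exists>S\<in>G. S \<subseteq> W \<union> Y)"
    by (auto simp: Diff_subset_conv)
  then show ?thesis using assms unfolding upset_def residual_def by auto
qed

lemma upset_subset_upset_residual: "upset X G \<subseteq> upset X (residual G W)"
  unfolding residual_def by (intro upset_mono) blast

lemma empty_mem_residual: "W \<in> upset X G \<Longrightarrow> {} \<in> residual G W"
  unfolding upset_def residual_def by blast

lemma minimal_residual_eq:
  assumes "T \<in> minimal_elems (residual G W)" "S \<in> G" "S \<subseteq> W \<union> T"
  shows "S - W = T"
proof -
  have "S - W \<in> residual G W" using assms(2) unfolding residual_def by blast
  moreover have "S - W \<subseteq> T" using assms(3) by blast
  ultimately show ?thesis using assms(1) unfolding minimal_elems_def by blast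
qed

lemma miss_prob_Un_indep:
  assumes "finite X"
  shows "miss_prob X (1 - (1 - w) * (1 - b)) G
    = (\<Sum>W\<in>Pow X. mu X w W * miss_prob X b (residual G W))"
proof -
  have "miss_prob X b (residual G W)
      = (\<Sum>Y\<in>Pow X. mu X b Y * of_bool (W \<union> Y \<notin> upset X G))" if "W \<in> Pow X" for W
    unfolding miss_prob_indicator[OF assms] using that Un_mem_upset_iff[of W X] by simp
  then show ?thesis
    unfolding miss_prob_indicator[OF assms] sum_mu_Un_indep[OF assms, symmetric] by simp
qed

text \<open>All fragments \<open>T\<close> of size \<open>k\<close> completing \<open>Z - T\<close> to \<open>Z\<close> lie inside one member of \<open>G\<close>.\<close>
lemma card_fragments_completing_le:
  assumes fX: "finite X" and GX: "G \<subseteq> Pow X" and cl: "\<forall>S\<in>G. card S \<le> l"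
  shows "card {T. T \<subseteq> Z \<and> card T = k \<and> T \<in> minimal_elems (residual G (Z - T))} \<le> l choose k"
    (is "card ?\<Phi> \<le> _")
proof (cases "?\<Phi> = {}")
  case True
  then show ?thesis by (metis card.empty le0)
next
  case False
  then obtain T0 where T0: "T0 \<subseteq> Z" "T0 \<in> minimal_elems (residual G (Z - T0))" by blast
  then obtain S0 where S0: "S0 \<in> G" "T0 = S0 - (Z - T0)"
    using minimal_elems_subset unfolding residual_def by blast
  have fin: "finite S0" using S0(1) GX fX finite_subset by blast
  have "?\<Phi> \<subseteq> {T. T \<subseteq> S0 \<and> card T = k}"
  proof safe
    fix T assume "T \<subseteq> Z" "T \<in> minimal_elems (residual G (Z - T))"
    moreover have "S0 \<subseteq> (Z - T) \<union> T" using S0 T0 \<open>T \<subseteq> Z\<close> by blast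
    ultimately have "S0 - (Z - T) = T" using minimal_residual_eq S0(1) by blast
    then show "x \<in> S0" if "x \<in> T" for x using that by blast
  qed
  then have "card ?\<Phi> \<le> card S0 choose k"
    using card_mono[of "{T. T \<subseteq> S0 \<and> card T = k}"] fin by (simp add: n_subsets)
  also have "\<dots> \<le> l choose k" using S0(1) cl by (simp add: binomial_right_mono)
  finally show ?thesis .
qed

lemma sum_fragments_reindex:
  assumes GX: "G \<subseteq> Pow X"
  shows "(\<Sum>(W, T)\<in>(SIGMA W:Pow X. {T\<in>minimal_elems (residual G W). card T = k}). f (W \<union> T))
    = (\<Sum>(Z, T)\<in>(SIGMA Z:Pow X. {T. T \<subseteq> Z \<and> card T = k \<and> T \<in> minimal_elems (residual G (Z - T))}).
        f Z)"
proof -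
  have src: "T \<subseteq> X" "T \<inter> W = {}" "W \<union> T - T = W"
    if "T \<in> minimal_elems (residual G W)" for W T
    using that minimal_elems_subset residual_subset_Pow[OF GX] residual_disjoint by blast+
  have tgt: "Z - T \<union> T = Z" if "T \<subseteq> Z" for Z T :: "'a set"
    using that by blast
  show ?thesis
    by (rule sum.reindex_bij_witness[where i = "\<lambda>(Z, T). (Z - T, T)" and j = "\<lambda>(W, T). (W \<union> T, T)"])
      (auto simp: src tgt dest: src(1,2))
qed

lemma expected_card_fragments:
  assumes fX: "finite X" and GX: "G \<subseteq> Pow X" and cl: "\<forall>S\<in>G. card S \<le> l"
    and w: "0 < w" "w \<le> 1"
  shows "(\<Sum>W\<in>Pow X. mu X w W * card {T\<in>minimal_elems (residual G W). card T = k})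
    \<le> real (l choose k) * ((1 - w) / w) ^ k"
proof -
  let ?M = "\<lambda>W. {T\<in>minimal_elems (residual G W). card T = k}"
  let ?\<Phi> = "\<lambda>Z. {T. T \<subseteq> Z \<and> card T = k \<and> T \<in> minimal_elems (residual G (Z - T))}"
  define r where "r = ((1 - w) / w) ^ k"
  have r: "0 \<le> r" unfolding r_def using w by simp
  have finM: "finite (?M W)" for W
    using finite_residual[OF fX GX] minimal_elems_subset
    by (metis (no_types, lifting) finite_subset mem_Collect_eq subsetI)
  have fin\<Phi>: "finite (?\<Phi> Z)" if "Z \<subseteq> X" for Z
  proof (rule finite_subset)
    show "?\<Phi> Z \<subseteq> Pow Z" by blast
    show "finite (Pow Z)" using rev_finite_subset[OF fX that] by simp
  qed
  have "(\<Sum>W\<in>Pow X. mu X w W * card (?M W)) = (\<Sum>(W, T)\<in>(SIGMA W:Pow X. ?M W). mu X w W)"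
    using fX finM by (simp add: sum.Sigma[symmetric] mult.commute)
  also have "\<dots> = (\<Sum>(W, T)\<in>(SIGMA W:Pow X. ?M W). mu X w (W \<union> T) * r)"
  proof (intro sum.cong refl, clarify)
    fix W T assume "W \<subseteq> X" "T \<in> minimal_elems (residual G W)" "k = card T"
    then show "mu X w W = mu X w (W \<union> T) * r"
      unfolding r_def using mu_Un_disjoint[OF fX, of W T w] w minimal_elems_subset
        residual_subset_Pow[OF GX] residual_disjoint by blast
  qed
  also have "\<dots> = (\<Sum>(Z, T)\<in>(SIGMA Z:Pow X. ?\<Phi> Z). mu X w Z * r)"
    by (rule sum_fragments_reindex[OF GX])
  also have "\<dots> = (\<Sum>Z\<in>Pow X. card (?\<Phi> Z) * (mu X w Z * r))"
    using fX fin\<Phi> by (simp add: sum.Sigma[symmetric])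
  also have "\<dots> \<le> (\<Sum>Z\<in>Pow X. (l choose k) * (mu X w Z * r))"
    using card_fragments_completing_le[OF fX GX cl] w r
    by (intro sum_mono mult_right_mono) (auto intro!: mult_nonneg_nonneg mu_nonneg)
  also have "\<dots> = real (l choose k) * r"
    using sum_mu_Pow[OF fX, of w] by (simp add: sum_distrib_left[symmetric] sum_distrib_right[symmetric])
  finally show ?thesis unfolding r_def .
qed

lemma sum_card_group:
  fixes g :: "nat \<Rightarrow> 'b::comm_semiring_1"
  assumes "finite A" "\<forall>T\<in>A. card T \<le> l"
  shows "(\<Sum>T\<in>{T\<in>A. h < card T}. g (card T)) = (\<Sum>k\<in>{h<..l}. of_nat (card {T\<in>A. card T = k}) * g k)"
proof -
  have "(\<Sum>T\<in>{T\<in>A. h < card T}. g (card T))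
      = (\<Sum>k\<in>{h<..l}. \<Sum>T\<in>{T. T \<in> {T\<in>A. h < card T} \<and> card T = k}. g (card T))"
    using assms by (intro sum.group[symmetric]) auto
  also have "\<dots> = (\<Sum>k\<in>{h<..l}. \<Sum>T\<in>{T\<in>A. card T = k}. g k)"
    by (intro sum.cong) auto
  finally show ?thesis by simp
qed

lemma expected_large_fragments:
  assumes fX: "finite X" and GX: "G \<subseteq> Pow X" and cl: "\<forall>S\<in>G. card S \<le> l"
    and w: "0 < w" "w \<le> 1" and a: "0 \<le> a" "a \<le> w"
  shows "(\<Sum>W\<in>Pow X. mu X w W * (\<Sum>T\<in>{T\<in>minimal_elems (residual G W). h < card T}. a ^ card T))
    \<le> (a / w) ^ Suc h * 2 ^ l"
proof -
  let ?N = "\<lambda>W k. real (card {T\<in>minimal_elems (residual G W). card T = k})"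
  have group: "(\<Sum>T\<in>{T\<in>minimal_elems (residual G W). h < card T}. a ^ card T)
      = (\<Sum>k\<in>{h<..l}. ?N W k * a ^ k)" for W
    using finite_subset[OF minimal_elems_subset finite_residual[OF fX GX]]
      card_residual_le[OF fX GX cl] minimal_elems_subset
    by (intro sum_card_group) blast+
  have "(\<Sum>W\<in>Pow X. mu X w W * (\<Sum>k\<in>{h<..l}. ?N W k * a ^ k))
      = (\<Sum>k\<in>{h<..l}. (\<Sum>W\<in>Pow X. mu X w W * ?N W k) * a ^ k)"
    by (simp add: sum_distrib_left sum_distrib_right sum.swap[of _ "Pow X"] mult.assoc)
  also have "\<dots> \<le> (\<Sum>k\<in>{h<..l}. real (l choose k) * ((1 - w) / w) ^ k * a ^ k)"
    using expected_card_fragments[OF fX GX cl w] a by (intro sum_mono mult_right_mono) auto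
  also have "\<dots> \<le> (\<Sum>k\<in>{h<..l}. real (l choose k) * (a / w) ^ Suc h)"
  proof (intro sum_mono)
    fix k assume "k \<in> {h<..l}"
    have "((1 - w) / w) ^ k * a ^ k = ((1 - w) * a / w) ^ k"
      by (simp add: power_mult_distrib[symmetric])
    also have "\<dots> \<le> (a / w) ^ k"
      using w a by (intro power_mono divide_right_mono) (auto simp: mult_left_le_one_le)
    also have "\<dots> \<le> (a / w) ^ Suc h"
      using w a \<open>k \<in> {h<..l}\<close> by (intro power_decreasing) auto
    finally have "((1 - w) / w) ^ k * a ^ k \<le> (a / w) ^ Suc h" .
    then show "real (l choose k) * ((1 - w) / w) ^ k * a ^ k \<le> real (l choose k) * (a / w) ^ Suc h"
      unfolding mult.assoc by (rule mult_left_mono) simp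
  qed
  also have "\<dots> \<le> (\<Sum>k\<le>l. real (l choose k)) * (a / w) ^ Suc h"
    unfolding sum_distrib_right[symmetric] using w a by (intro mult_right_mono sum_mono2) auto
  also have "\<dots> = (a / w) ^ Suc h * 2 ^ l"
    using choose_row_sum[of l] by (metis mult.commute of_nat_numeral of_nat_power of_nat_sum)
  finally show ?thesis unfolding group .
qed

section \<open>Rounds of sprinkling\<close>

text \<open>The thresholds satisfy \<open>c\<^sub>0 = c\<^sub>1 = 1/48\<close>, \<open>c\<^sub>l < 1/2\<close>, and the gap \<open>c\<^sub>l - c\<^bsub>\<lfloor>l/2\<rfloor>\<^esub>\<close>
  absorbs the expected weight of the fragments of size larger than \<open>l/2\<close>.\<close>
definition cost_threshold :: "nat \<Rightarrow> real" where
  "cost_threshold l = 1/2 - (23/48) * (1/4) ^ (l div 2)"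

definition bounded_uncoverable :: "'a set \<Rightarrow> real \<Rightarrow> nat \<Rightarrow> 'a set set \<Rightarrow> bool" where
  "bounded_uncoverable X a l G \<longleftrightarrow>
     G \<subseteq> Pow X \<and> (\<forall>S\<in>G. card S \<le> l) \<and> uncoverable X a (cost_threshold l) G"

lemma cost_threshold_0_1: "cost_threshold 0 = 1/48" "cost_threshold 1 = 1/48"
  unfolding cost_threshold_def by simp_all

lemma cost_threshold_less: "cost_threshold l < 1/2"
  unfolding cost_threshold_def by simp

lemma cost_threshold_gap:
  assumes "2 \<le> l"
  shows "(69/48) * (1/4) ^ (l div 2) \<le> cost_threshold l - cost_threshold (l div 2)"
proof -
  define h where "h = l div 2"
  have "1 \<le> h" using assms h_def by simp
  then have "4 * (1/4::real) ^ h = (1/4) ^ (h - 1)" by (simp add: power_diff)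
  also have "\<dots> \<le> (1/4) ^ (h div 2)" using \<open>1 \<le> h\<close> by (intro power_decreasing) auto
  finally have "4 * (1/4::real) ^ h \<le> (1/4) ^ (h div 2)" .
  then show ?thesis unfolding cost_threshold_def h_def[symmetric] by simp
qed

lemma exp_le_two_powr: "0 \<le> x \<Longrightarrow> exp (- x) \<le> 2 powr (- x :: real)"
  using ln_2_less_1 by (simp add: powr_def mult_left_le)

lemma three_fifths_le_two_powr:
  fixes B :: real
  assumes "B \<le> 32"
  shows "3/5 \<le> 2 powr (- B / 48)"
proof -
  have "(3/5) ^ 3 \<le> (1/4 :: real)" by (simp add: power3_eq_cube)
  also have "(1/4 :: real) = 2 powr (- 2/3 * 3)" by (simp add: powr_minus powr_numeral)
  also have "\<dots> = (2 powr (- 2/3)) ^ 3" by (simp add: powr_realpow[symmetric] powr_powr)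
  finally have "3/5 \<le> (2 powr (- 2/3) :: real)"
    by (subst (asm) power_mono_iff) auto
  also have "\<dots> \<le> 2 powr (- B / 48)" using assms by (intro powr_mono) auto
  finally show ?thesis .
qed

lemma cost_threshold_estimate:
  assumes l: "2 \<le> l" and t: "0 \<le> t" "t \<le> 1/16"
  shows "real (l div 2) + real l * (t ^ Suc (l div 2) * 2 ^ l
      / (cost_threshold l - cost_threshold (l div 2))) \<le> real l * (3/5)"
proof -
  define h where "h = l div 2"
  define u where "u = (1/4::real) ^ h"
  have u: "0 < u" unfolding u_def by simp
  have "t ^ Suc h * 2 ^ l \<le> (1/16) ^ Suc h * 2 ^ (2 * h + 1)"
    using t l unfolding h_def by (intro mult_mono power_mono power_increasing) auto
  also have "\<dots> = (1/8) * ((1/16) * 4) ^ h"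
    by (simp add: power_add power_mult power_mult_distrib[symmetric])
  also have "\<dots> = u / 8" unfolding u_def by simp
  finally have num: "t ^ Suc h * 2 ^ l \<le> u / 8" .
  have gap: "(69/48) * u \<le> cost_threshold l - cost_threshold h"
    using cost_threshold_gap[OF l] unfolding u_def h_def .
  have "t ^ Suc h * 2 ^ l / (cost_threshold l - cost_threshold h) \<le> (u / 8) / ((69/48) * u)"
    using u by (intro frac_le[OF _ num _ gap]) auto
  also have "\<dots> \<le> 1/10" using u by simp
  finally have "real h + real l * (t ^ Suc h * 2 ^ l / (cost_threshold l - cost_threshold h))
      \<le> real l / 2 + real l * (1/10)"
    unfolding h_def by (intro add_mono mult_left_mono) linarith+
  then show ?thesis unfolding h_def by simp
qed

lemma sum_mu_markov:
  assumes "0 \<le> w" "w \<le> 1" "0 < d" "\<And>W. 0 \<le> f W"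
  shows "(\<Sum>W\<in>Pow X. mu X w W * of_bool (d < f W)) \<le> (\<Sum>W\<in>Pow X. mu X w W * f W) / d"
proof -
  have "(\<Sum>W\<in>Pow X. mu X w W * of_bool (d < f W)) \<le> (\<Sum>W\<in>Pow X. mu X w W * (f W / d))"
    using assms mu_nonneg[OF assms(1,2)] by (intro sum_mono mult_left_mono) auto
  then show ?thesis by (simp add: sum_divide_distrib)
qed

lemma miss_prob_bound_0:
  assumes "finite X" "bounded_uncoverable X a 0 G"
  shows "miss_prob X p G = 0"
  using assms uncoverable_nonempty[of X a "cost_threshold 0" G] cost_threshold_0_1
  unfolding bounded_uncoverable_def by (intro miss_prob_card_0) auto

lemma miss_prob_card_le_1:
  assumes fX: "finite X" and GX: "G \<subseteq> Pow X" and card1: "\<forall>S\<in>G. card S \<le> 1"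
    and unc: "uncoverable X a c G" and a: "0 < a" and w: "0 < w" "w \<le> 1"
  shows "miss_prob X w G \<le> exp (- w * c / a)"
proof (cases "{} \<in> G")
  case True
  then show ?thesis by (simp add: miss_prob_empty_mem)
next
  case False
  have sing: "\<exists>x. S = {x}" if "S \<in> G" for S
  proof -
    have "finite S" using that GX rev_finite_subset[OF fX] by blast
    moreover have "S \<noteq> {}" using that False by blast
    ultimately
    have "card S = 1" using that card1 by (auto simp: le_Suc_eq)
    then show ?thesis by (simp add: card_1_singleton_iff)
  qed
  define D where "D = \<Union>G"
  have DX: "D \<subseteq> X" using GX D_def by auto
  have G_eq: "G = (\<lambda>x. {x}) ` D" unfolding D_def using sing by fastforce
  have "Pow X - upset X G = {Y\<in>Pow X. Y \<inter> D = {}}" unfolding upset_def G_eq by auto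
  then have "miss_prob X w G = (1 - w) ^ card D"
    unfolding miss_prob_def using sum_mu_disjoint[OF fX DX] by simp
  also have "\<dots> \<le> exp (- w) ^ card D"
    using w by (intro power_mono) (auto simp flip: diff_conv_add_uminus intro: exp_ge_add_one_self[of "- w", simplified])
  also have "\<dots> = exp (- w * card D)" by (simp add: exp_of_nat_mult[symmetric] mult.commute)
  also have "\<dots> \<le> exp (- w * c / a)"
  proof -
    have "c < (\<Sum>S\<in>G. a ^ card S)" by (rule uncoverable_less_sum[OF unc GX])
    also have "\<dots> = card D * a" unfolding G_eq by (simp add: sum.reindex card_image)
    finally have "c / a \<le> card D" using a by (simp add: divide_le_eq mult.commute)
    then have "w * (c / a) \<le> w * card D" using w by (intro mult_left_mono) auto
    then show ?thesis by simp
  qed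
  finally show ?thesis .
qed

lemma miss_prob_round_card_1:
  assumes fX: "finite X" and w: "0 < w" "w \<le> 1" and b: "0 \<le> b" "b \<le> 1"
    and a: "0 < a" and B: "0 < B" "a * B \<le> w"
    and G: "bounded_uncoverable X a 1 G" and IH: "miss_prob X b G \<le> t"
  shows "miss_prob X (1 - (1 - w) * (1 - b)) G \<le> t * 2 powr (- B / 48)"
proof -
  have GX: "G \<subseteq> Pow X" and unc: "uncoverable X a (1/48) G"
    using G unfolding bounded_uncoverable_def cost_threshold_0_1 by auto
  have t: "0 \<le> t" using miss_prob_nonneg[OF b, of X G] IH by (rule order_trans)
  have "miss_prob X b (residual G W) \<le> t * of_bool (W \<notin> upset X G)" for W
  proof (cases "W \<in> upset X G")
    case True
    then show ?thesis by (simp add: miss_prob_empty_mem empty_mem_residual)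
  next
    case False
    then show ?thesis
      using miss_prob_antimono[OF fX b upset_subset_upset_residual, of G W] IH by simp
  qed
  then have "miss_prob X (1 - (1 - w) * (1 - b)) G \<le> (\<Sum>W\<in>Pow X. mu X w W * (t * of_bool (W \<notin> upset X G)))"
    unfolding miss_prob_Un_indep[OF fX] using w by (intro sum_mono mult_left_mono mu_nonneg) auto
  also have "\<dots> = t * miss_prob X w G"
    unfolding miss_prob_indicator[OF fX] by (simp add: sum_distrib_left mult.left_commute)
  also have "\<dots> \<le> t * exp (- B / 48)"
  proof -
    have "miss_prob X w G \<le> exp (- w * (1/48) / a)"
      using miss_prob_card_le_1[OF fX GX _ unc a w] G unfolding bounded_uncoverable_def by blast
    also have "\<dots> \<le> exp (- B / 48)" using a B by (simp add: field_simps)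
    finally show ?thesis using t by (rule mult_left_mono)
  qed
  also have "\<dots> \<le> t * 2 powr (- B / 48)"
    using exp_le_two_powr[of "B / 48"] B t by (intro mult_left_mono) auto
  finally show ?thesis .
qed

lemma miss_prob_residual_le:
  assumes fX: "finite X" and G: "bounded_uncoverable X a l G" and W: "W \<subseteq> X"
    and a: "0 \<le> a" and b: "0 \<le> b" "b \<le> 1" and t: "0 \<le> t" and h: "h \<le> l"
    and IH: "\<And>l' G'. l' \<le> l \<Longrightarrow> bounded_uncoverable X a l' G' \<Longrightarrow> miss_prob X b G' \<le> real l' * t"
  shows "miss_prob X b (residual G W) \<le> real h * t + real l * t *
    of_bool (cost_threshold l - cost_threshold h
      < (\<Sum>T\<in>{T\<in>minimal_elems (residual G W). h < card T}. a ^ card T))"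
proof -
  let ?U = "minimal_elems (residual G W)"
  have GX: "G \<subseteq> Pow X" and cl: "\<forall>S\<in>G. card S \<le> l" and unc: "uncoverable X a (cost_threshold l) G"
    using G unfolding bounded_uncoverable_def by auto
  have UX: "?U \<subseteq> Pow X" using residual_subset_Pow[OF GX] minimal_elems_subset by blast
  have up: "upset X ?U = upset X (residual G W)"
    using fX residual_subset_Pow[OF GX] by (rule upset_minimal_elems)
  have "upset X G \<subseteq> upset X ?U" using upset_subset_upset_residual up by blast
  then have U: "bounded_uncoverable X a l ?U"
    unfolding bounded_uncoverable_def
    using UX card_residual_le[OF fX GX cl] minimal_elems_subset uncoverable_mono[OF unc] by blast
  have miss_U: "miss_prob X b (residual G W) \<le> miss_prob X b ?U"
    using up by (intro miss_prob_antimono[OF fX b]) simp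
  show ?thesis
  proof (cases "cost_threshold l - cost_threshold h
      < (\<Sum>T\<in>{T\<in>?U. h < card T}. a ^ card T)")
    case True
    moreover have "0 \<le> real h * t" using t by simp
    ultimately show ?thesis using miss_U IH[OF order_refl U] by simp
  next
    case False
    let ?Us = "{T\<in>?U. card T \<le> h}"
    have "uncoverable X a (cost_threshold h) ?Us"
      using False by (intro uncoverable_card_le[OF fX UX _ a]) (use U in \<open>auto simp: bounded_uncoverable_def\<close>)
    then have Us: "bounded_uncoverable X a h ?Us" using UX unfolding bounded_uncoverable_def by blast
    have "miss_prob X b ?U \<le> miss_prob X b ?Us" by (intro miss_prob_antimono[OF fX b] upset_mono) blast
    then show ?thesis using False miss_U IH[OF h Us] by simp
  qed
qed

lemma miss_prob_round_card_ge_2: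
  assumes fX: "finite X" and w: "0 < w" "w \<le> 1" and b: "0 \<le> b" "b \<le> 1"
    and a: "0 < a" and B: "16 \<le> B" "B \<le> 32" "a * B \<le> w" and t: "0 \<le> t"
    and l: "2 \<le> l" and G: "bounded_uncoverable X a l G"
    and IH: "\<And>l' G'. l' \<le> l \<Longrightarrow> bounded_uncoverable X a l' G' \<Longrightarrow> miss_prob X b G' \<le> real l' * t"
  shows "miss_prob X (1 - (1 - w) * (1 - b)) G \<le> real l * t * 2 powr (- B / 48)"
proof -
  define h where "h = l div 2"
  define \<delta> where "\<delta> = cost_threshold l - cost_threshold h"
  define Z where "Z = (\<lambda>W. \<Sum>T\<in>{T\<in>minimal_elems (residual G W). h < card T}. a ^ card T)"
  have GX: "G \<subseteq> Pow X" and cl: "\<forall>S\<in>G. card S \<le> l" using G unfolding bounded_uncoverable_def by auto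
  have \<delta>: "0 < \<delta>"
    using cost_threshold_gap[OF l] zero_less_power[of "1/4 :: real" "l div 2"]
    unfolding \<delta>_def h_def by linarith
  have "a * 16 \<le> a * B" using a B by (intro mult_left_mono) auto
  then have "a * 16 \<le> w" using B(3) by linarith
  then have aw: "0 \<le> a / w" "a / w \<le> 1/16" using a w B by (auto simp: field_simps)
  have "miss_prob X (1 - (1 - w) * (1 - b)) G \<le> (\<Sum>W\<in>Pow X. mu X w W * (real h * t + real l * t * of_bool (\<delta> < Z W)))"
    unfolding miss_prob_Un_indep[OF fX] \<delta>_def Z_def h_def using w a b t l
    by (intro sum_mono mult_left_mono mu_nonneg miss_prob_residual_le[OF fX G] IH) auto
  also have "\<dots> = real h * t + real l * t * (\<Sum>W\<in>Pow X. mu X w W * of_bool (\<delta> < Z W))"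
    using sum_mu_Pow[OF fX, of w]
    by (simp add: sum.distrib algebra_simps sum_distrib_left[symmetric])
  also have "\<dots> \<le> real h * t + real l * t * ((\<Sum>W\<in>Pow X. mu X w W * Z W) / \<delta>)"
    using w \<delta> a t unfolding Z_def by (intro add_left_mono mult_left_mono sum_mu_markov sum_nonneg) auto
  also have "\<dots> \<le> real h * t + real l * t * ((a / w) ^ Suc h * 2 ^ l / \<delta>)"
    using w a aw \<delta> t unfolding Z_def
    by (intro add_left_mono mult_left_mono divide_right_mono expected_large_fragments[OF fX GX cl])
      (auto simp: field_simps)
  also have "\<dots> = t * (real h + real l * ((a / w) ^ Suc h * 2 ^ l / \<delta>))" by (simp add: algebra_simps)
  also have "\<dots> \<le> t * (real l * (3/5))"
    using cost_threshold_estimate[OF l aw] t unfolding h_def \<delta>_def by (intro mult_left_mono)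
  also have "\<dots> \<le> real l * t * 2 powr (- B / 48)"
    using mult_left_mono[OF three_fifths_le_two_powr[OF B(2)], of "real l * t"] t by (simp add: mult_ac)
  finally show ?thesis .
qed

lemma miss_prob_round:
  assumes fX: "finite X" and w: "0 < w" "w \<le> 1" and b: "0 \<le> b" "b \<le> 1"
    and a: "0 < a" and B: "0 < B" "a * B \<le> w" and t: "0 \<le> t"
    and IH: "\<And>l' G'. bounded_uncoverable X a l' G' \<Longrightarrow> (2 \<le> l' \<Longrightarrow> 16 \<le> B \<and> B \<le> 32)
      \<Longrightarrow> miss_prob X b G' \<le> real l' * t"
    and G: "bounded_uncoverable X a l G" and lB: "2 \<le> l \<Longrightarrow> 16 \<le> B \<and> B \<le> 32"
  shows "miss_prob X (1 - (1 - w) * (1 - b)) G \<le> real l * t * 2 powr (- B / 48)"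
proof -
  consider "l = 0" | "l = 1" | "2 \<le> l" by linarith
  then show ?thesis
  proof cases
    case 1
    then show ?thesis using miss_prob_bound_0[OF fX] G by simp
  next
    case 2
    then show ?thesis using miss_prob_round_card_1[OF fX w b a B, of G t] G IH[of 1 G] by simp
  next
    case 3
    then show ?thesis
      using lB by (intro miss_prob_round_card_ge_2[OF fX w b a _ _ B(2) t 3 G] IH) auto
  qed
qed

lemma miss_prob_rounds:
  fixes N :: nat and B :: real
  assumes fX: "finite X" and w: "0 < w" "w \<le> 1" and a: "0 < a" and B: "0 < B" "a * B \<le> w"
  shows "bounded_uncoverable X a l G \<Longrightarrow> (2 \<le> l \<Longrightarrow> 16 \<le> B \<and> B \<le> 32)
    \<Longrightarrow> miss_prob X (1 - (1 - w) ^ N) G \<le> real l * 2 powr (- (real N * B) / 48)"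
proof (induction N arbitrary: l G)
  case 0
  show ?case
  proof (cases "l = 0")
    case True
    then show ?thesis using miss_prob_bound_0[OF fX] "0.prems"(1) by simp
  next
    case False
    then show ?thesis using miss_prob_le_1[OF fX, of 0 G] by simp
  qed
next
  case (Suc N)
  have "1 - (1 - w) ^ Suc N = 1 - (1 - w) * (1 - (1 - (1 - w) ^ N))" by simp
  moreover have "0 \<le> 1 - (1 - w) ^ N" "1 - (1 - w) ^ N \<le> 1" using w by (auto simp: power_le_one)
  moreover have "2 powr (- (real N * B) / 48) * 2 powr (- B / 48) = 2 powr (- (real (Suc N) * B) / 48)"
    by (simp add: powr_add[symmetric] field_simps)
  ultimately show ?case
    using miss_prob_round[OF fX w _ _ a B _ Suc.IH Suc.prems] by (simp add: mult.assoc)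
qed

text \<open>Split \<open>X\<^sub>p\<close> into \<open>N\<close> independent rounds with \<open>(1 - w)^N = 1 - p\<close>; Bernoulli's inequality
  gives \<open>w \<ge> p / N\<close>.\<close>
lemma miss_prob_le_rounds:
  fixes N :: nat and p q :: real
  assumes fX: "finite X" and p: "0 < p" "p < 1" and q: "0 < q" and N: "0 < N"
    and G: "bounded_uncoverable X q l G"
    and lB: "2 \<le> l \<Longrightarrow> 16 \<le> p / (N * q) \<and> p / (N * q) \<le> 32"
  shows "miss_prob X p G \<le> real l * 2 powr (- p / (48 * q))"
proof -
  define w where "w = 1 - root N (1 - p)"
  have "1 + real N * (- p / N) \<le> (1 + (- p / N)) ^ N"
    using p N by (intro Bernoulli_inequality) (simp add: field_simps)
  then have "root N (1 - p) \<le> root N ((1 - p / N) ^ N)"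
    using p N by (intro real_root_le_mono) auto
  also have "\<dots> = 1 - p / N"
    using p N by (intro real_root_power_cancel) (auto simp: field_simps)
  finally have "q * (p / (N * q)) \<le> w" unfolding w_def using q by simp
  moreover have "0 < w" "w \<le> 1" "1 - (1 - w) ^ N = p" unfolding w_def using p N by auto
  moreover have "- (real N * (p / (N * q))) / 48 = - p / (48 * q)" using N q by simp
  ultimately show ?thesis
    using miss_prob_rounds[OF fX _ _ q _ _ G lB, of w N] p q N by (simp add: mult.commute)
qed

lemma exists_rounds:
  fixes y :: real
  assumes "1 \<le> y"
  shows "\<exists>N::nat>0. 16 \<le> 32 * y / N \<and> 32 * y / N \<le> 32"
proof -
  define N where "N = nat \<lceil>y\<rceil>"
  have "y \<le> N" "N < y + 1" unfolding N_def using assms by linarith+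
  then show ?thesis using assms by (intro exI[of _ N]) (auto simp: field_simps)
qed

section \<open>The threshold \<open>q\<close>\<close>

text \<open>\<open>qq X F\<close> is a supremum, so covers of weight below \<open>1/2\<close> at \<open>qq X F\<close> would, by continuity,
  persist slightly above it.\<close>
lemma half_le_cover_weight_qq:
  assumes fX: "finite X" and F: "F \<noteq> {}" and q: "0 < qq X F"
    and C: "C \<subseteq> Pow X" "covers X C F"
  shows "1/2 \<le> (\<Sum>S\<in>C. qq X F ^ card S)"
proof (rule ccontr)
  let ?q = "qq X F"
  let ?f = "\<lambda>r::real. \<Sum>S\<in>C. r ^ card S"
  assume "\<not> 1/2 \<le> ?f ?q"
  then have lt: "?f ?q < 1/2" by simp
  have finC: "finite C" using C fX by (meson finite_Pow_iff finite_subset)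
  show False
  proof (cases "1 \<le> ?q")
    case True
    have "(\<Sum>S\<in>C. (1::real)) \<le> ?f ?q" using True by (intro sum_mono) (simp add: one_le_power)
    then have "real (card C) < 1" using lt by simp
    then have "C = {}" using finC by simp
    then show False using C(2) F unfolding covers_def by simp
  next
    case False
    have "(?f \<longlongrightarrow> ?f ?q) (at_right ?q)" by (intro tendsto_intros)
    then have "eventually (\<lambda>r. ?f r < 1/2) (at_right ?q)" using lt by (rule order_tendstoD)
    then obtain b where b: "b > ?q" "\<And>r. ?q < r \<Longrightarrow> r < b \<Longrightarrow> ?f r < 1/2"
      unfolding eventually_at_right_field by blast
    define r where "r = (?q + min b 1) / 2"
    have r: "?q < r" "r < b" "r \<le> 1" using b False unfolding r_def by auto
    then have "?f r < 1/2" using b by blast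
    then have "p_small X r F" unfolding p_small_def using C by (intro exI[of _ C]) auto
    then have "r \<le> ?q"
      unfolding qq_def using r q by (intro cSup_upper bdd_aboveI[of _ 1]) (auto simp: qq_def)
    then show False using r by simp
  qed
qed

lemma uncoverable_qq:
  assumes fX: "finite X" and GX: "G \<subseteq> Pow X" "G \<noteq> {}" and q: "0 < qq X (upset X G)"
    and c: "c < 1/2"
  shows "uncoverable X (qq X (upset X G)) c G"
  unfolding uncoverable_def
proof (intro allI impI)
  fix C assume C: "C \<subseteq> Pow X" "covers X C (upset X G)"
  have "upset X G \<noteq> {}" using subset_upset[OF GX(1)] GX(2) by blast
  then have "1/2 \<le> (\<Sum>S\<in>C. qq X (upset X G) ^ card S)"
    using half_le_cover_weight_qq[OF fX _ q C] by blast
  then show "c < (\<Sum>S\<in>C. qq X (upset X G) ^ card S)" using c by linarith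
qed

lemma qq_pos_if_two_powr_less:
  assumes "1 \<le> l" "0 < p" "real l * 2 powr (- p / (48 * q)) < 1"
  shows "0 < q"
proof (rule ccontr)
  assume "\<not> 0 < q"
  then have "p / (48 * q) \<le> 0" using assms(2) by (intro divide_nonneg_nonpos) auto
  then have "0 \<le> - p / (48 * q)" by simp
  then have "1 \<le> 2 powr (- p / (48 * q))" by (intro ge_one_powr_ge_zero) auto
  then have "1 * 1 \<le> real l * 2 powr (- p / (48 * q))" using assms(1) by (intro mult_mono) auto
  then show False using assms(3) by simp
qed

lemma miss_prob_le_two_powr_of_uncoverable:
  assumes fX: "finite X" and p: "0 < p" "p < 1" and q: "0 < q" and l: "1 \<le> l"
    and G: "bounded_uncoverable X q l G" and small: "real l * 2 powr (- p / (48 * q)) < 1"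
  shows "miss_prob X p G \<le> real l * 2 powr (- p / (48 * q))"
proof (cases "l = 1")
  case True
  then show ?thesis using miss_prob_le_rounds[OF fX p q _ G, of 1] by simp
next
  case False
  then have "2 \<le> real l" using l by simp
  then have "2 * 2 powr (- p / (48 * q)) \<le> real l * 2 powr (- p / (48 * q))"
    by (intro mult_right_mono) auto
  then have "2 * 2 powr (- p / (48 * q)) < 1" using small by linarith
  then have "2 powr (- p / (48 * q)) < 2 powr (- 1)" by (simp add: powr_minus)
  then have "- p / (48 * q) < - 1" by (subst (asm) powr_less_cancel_iff) auto
  then have "1 \<le> p / (32 * q)" using q by (simp add: field_simps)
  then obtain N :: nat where "0 < N" "16 \<le> 32 * (p / (32 * q)) / N" "32 * (p / (32 * q)) / N \<le> 32"
    using exists_rounds by blast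
  then show ?thesis using miss_prob_le_rounds[OF fX p q _ G, of N] q by (simp add: field_simps)
qed

lemma miss_prob_le_two_powr:
  assumes fX: "finite X" and GX: "G \<subseteq> Pow X" "G \<noteq> {}" and cl: "\<forall>S\<in>G. card S \<le> l"
    and p: "0 < p" "p < 1"
  shows "miss_prob X p G \<le> real l * 2 powr (- p / (48 * qq X (upset X G)))"
proof -
  define q where "q = qq X (upset X G)"
  consider "l = 0" | "1 \<le> real l * 2 powr (- p / (48 * q))"
    | "1 \<le> l" "real l * 2 powr (- p / (48 * q)) < 1" by linarith
  then show ?thesis
  proof cases
    case 1
    then show ?thesis using miss_prob_card_0[OF fX GX] cl by simp
  next
    case 2
    then show ?thesis using miss_prob_le_1[OF fX, of p G] p unfolding q_def by linarith
  next
    case 3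
    have q: "0 < q" using qq_pos_if_two_powr_less[OF 3(1) p(1) 3(2)] .
    have "bounded_uncoverable X q l G"
      unfolding bounded_uncoverable_def q_def
      using GX cl uncoverable_qq[OF fX GX q[unfolded q_def] cost_threshold_less] by blast
    then show ?thesis
      using miss_prob_le_two_powr_of_uncoverable[OF fX p q 3(1) _ 3(2)] unfolding q_def by blast
  qed
qed

lemma mu_fam_upset_ge:
  assumes fX: "finite X" and A: "A \<subseteq> Pow X" "A \<noteq> {}" and p: "0 < p" "p < 1"
  shows "1 - real (ell0 (upset X A)) * 2 powr (- p / (48 * qq X (upset X A))) \<le> mu_fam X p (upset X A)"
proof -
  let ?F = "upset X A"
  let ?G = "minimal_elems ?F"
  have GF: "upset X ?G = ?F"
    using upset_minimal_elems[OF fX upset_subset_Pow] unfolding upset_upset .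
  have GX: "?G \<subseteq> Pow X" using minimal_elems_subset upset_subset_Pow by blast
  have "upset X ?G \<noteq> {}" using GF subset_upset[OF A(1)] A(2) by blast
  then have "?G \<noteq> {}" by (auto simp: upset_def)
  have "finite ?G" using GX fX by (meson finite_Pow_iff finite_subset)
  then have "\<forall>S\<in>?G. card S \<le> ell0 ?F" unfolding ell0_def by simp
  then have "miss_prob X p ?G \<le> real (ell0 ?F) * 2 powr (- p / (48 * qq X ?F))"
    using miss_prob_le_two_powr[OF fX GX \<open>?G \<noteq> {}\<close> _ p] unfolding GF by blast
  then show ?thesis using mu_fam_upset[OF fX, of p ?G] unfolding GF by simp
qed

lemma mu_fam_mono: "0 \<le> p \<Longrightarrow> p \<le> 1 \<Longrightarrow> finite B \<Longrightarrow> A \<subseteq> B \<Longrightarrow> mu_fam X p A \<le> mu_fam X p B"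
  unfolding mu_fam_def by (intro sum_mono2) (auto intro: mu_nonneg)

lemma mu_fam_pos: "0 < p \<Longrightarrow> p < 1 \<Longrightarrow> finite A \<Longrightarrow> A \<noteq> {} \<Longrightarrow> 0 < mu_fam X p A"
  unfolding mu_fam_def by (intro sum_pos mu_pos)

lemma ratio_gt_of_lower_bound:
  fixes mA mB mF \<tau> \<epsilon> :: real
  assumes "0 < mA" "0 < mB" "0 < mF" "1 - \<tau> \<le> mF" "\<epsilon> < 1" "1 - mA / mF / mB * (1 - \<tau>) < \<epsilon>"
  shows "1 - \<epsilon> < mA / mB"
proof (cases "1 - \<tau> \<le> 0")
  case True
  have "0 \<le> mA / mF / mB" using assms by simp
  then have "mA / mF / mB * (1 - \<tau>) \<le> 0" using True by (rule mult_nonneg_nonpos)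
  then show ?thesis using assms by linarith
next
  case False
  have "mA / mF / mB * (1 - \<tau>) \<le> mA / mF / mB * mF" using assms False by (intro mult_left_mono) auto
  then show ?thesis using assms by simp
qed

theorem lemma3p7:
  fixes X :: "'a set" and A B :: "'a set set" and p \<epsilon> K :: real
  assumes "finite X"
    and "A \<noteq> {}" and "A \<subseteq> B" and "B \<subseteq> Pow X"
    and "0 < p" and "p < 1"
    and "K = 48"
    and "0 < \<epsilon>" and "\<epsilon> < 1"
    and "\<epsilon> > 1 - r_AB X A B p *
            (1 - real (ell0 (upset X A)) * 2 powr (- p / (K * qq X (upset X A))))"
  shows "mu_fam X p A / mu_fam X p B > 1 - \<epsilon>"
proof -
  have finPX: "finite (Pow X)" using assms(1) by simp
  have AX: "A \<subseteq> Pow X" using assms(3,4) by blast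
  have AF: "A \<subseteq> upset X A" by (rule subset_upset[OF AX])
  have "0 < mu_fam X p A"
    using mu_fam_pos[OF assms(5,6) finite_subset[OF AX finPX] assms(2)] .
  moreover have "mu_fam X p A \<le> mu_fam X p B" "mu_fam X p A \<le> mu_fam X p (upset X A)"
    using assms(3,5,6) AF finite_subset[OF assms(4) finPX] finite_subset[OF upset_subset_Pow finPX]
    by (auto intro: mu_fam_mono)
  moreover have "1 - real (ell0 (upset X A)) * 2 powr (- p / (K * qq X (upset X A)))
      \<le> mu_fam X p (upset X A)"
    unfolding assms(7) by (rule mu_fam_upset_ge[OF assms(1) AX assms(2,5,6)])
  ultimately show ?thesis
    using assms(9,10) unfolding r_AB_def by (intro ratio_gt_of_lower_bound) auto
qed

end
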